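(* Let $n\ge 2$ and let $\gamma:I\to\mathbb{R}^2$ ($0\in I$) be a front without inflection points. If $\gamma$ is $\mathcal{A}$-equivalent at $t=0$ to $Cusp_{(n,n+1)}(t)=(t^n,t^{n+1})$, then $t=0$ is a singular point of $Ev^{k}(\gamma)$ for every $k=1,\dots,n-2$ and a regular point of $Ev^{n-1}(\gamma)$.
   Context: A $C^\infty$ curve $\gamma:I\to\mathbb{R}^2$ is a front if there is a $C^\infty$ map $\nu:I\to S^1$ with $\gamma'(t)\cdot\nu(t)=0$ for all $t$ and $(\gamma,\nu):I\to\mathbb{R}^2\times S^1$ an immersion (a Legendre immersion). A point $t$ is singular for a curve $c$ if $c'(t)=\mathbf{0}$, regular otherwise. Let $M$ denote anticlockwise rotation by $\pi/2$, $\mu=M(\nu)$, $\ell(t)=\nu'(t)\cdot\mu(t)$ and $\beta(t)=\gamma'(t)\cdot\mu(t)$. The front has no inflection points if $\ell(t)\neq0$ for all $t\in I$. The evolute is $Ev(\gamma)(t)=\gamma(t)-\frac{\beta(t)}{\ell(t)}\nu(t)$; $(Ev(\gamma),\mu)$ is again a Legendre immersion without inflection points, with curvature $(\ell,\frac{d}{dt}(\beta/\ell))$. Iteratively, with $\beta_0=\beta$, $\beta_k=\frac{d}{dt}(\beta_{k-1}/\ell)$, $Ev^0(\gamma)=\gamma$ and $Ev^{k}(\gamma)=Ev^{k-1}(\gamma)-\frac{\beta_{k-1}}{\ell}M^{k-1}(\nu)$, where $(Ev^k(\gamma),M^k(\nu))$ is a Legendre immersion with curvature $(\ell,\beta_k)$.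 $\mathcal{A}$-equivalence means equivalence via $C^\infty$ diffeomorphism germs of source and target. *)

theory Defs
  imports "HOL-Analysis.Analysis"
begin

definition rotM :: "real \<times> real \<Rightarrow> real \<times> real" where
  "rotM v = (- snd v, fst v)"

text \<open>C-infinity on an open set S: there is a family F containing f, closed under
  taking all directional (Frechet) derivatives, every member differentiable on S.\<close>
definition smooth_on :: "'a::real_normed_vector set \<Rightarrow> ('a \<Rightarrow> 'b::real_normed_vector) \<Rightarrow> bool" where
  "smooth_on S f \<longleftrightarrow> (\<exists>F. f \<in> F \<and>
     (\<forall>g\<in>F. \<exists>g'. (\<forall>x\<in>S. (g has_derivative g' x) (at x)) \<and> (\<forall>v. (\<lambda>x. g' x v) \<in> F)))"

definition diffeo_on :: "'a::real_normed_vector set \<Rightarrow> 'a set \<Rightarrow> ('a \<Rightarrow> 'a) \<Rightarrow> bool" where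
  "diffeo_on U V \<phi> \<longleftrightarrow> open U \<and> open V \<and> \<phi> ` U = V \<and> inj_on \<phi> U
     \<and> smooth_on U \<phi> \<and> smooth_on V (inv_into U \<phi>)"

definition A_equivalent_at ::
  "(real \<Rightarrow> real \<times> real) \<Rightarrow> real \<Rightarrow> (real \<Rightarrow> real \<times> real) \<Rightarrow> real \<Rightarrow> bool" where
  "A_equivalent_at f a g b \<longleftrightarrow>
    (\<exists>U V \<phi> U' V' \<Phi>. diffeo_on U V \<phi> \<and> a \<in> U \<and> \<phi> a = b
       \<and> diffeo_on U' V' \<Phi> \<and> f a \<in> U' \<and> \<Phi> (f a) = g b
       \<and> (\<forall>t\<in>U. f t \<in> U' \<and> \<Phi> (f t) = g (\<phi> t)))"

definition cusp :: "nat \<Rightarrow> real \<Rightarrow> real \<times> real" where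
  "cusp n t = (t ^ n, t ^ (n + 1))"

definition legendre_immersion_on ::
  "real set \<Rightarrow> (real \<Rightarrow> real \<times> real) \<Rightarrow> (real \<Rightarrow> real \<times> real) \<Rightarrow> bool" where
  "legendre_immersion_on I \<gamma> \<nu> \<longleftrightarrow> smooth_on I \<gamma> \<and> smooth_on I \<nu>
     \<and> (\<forall>t\<in>I. norm (\<nu> t) = 1)
     \<and> (\<forall>t\<in>I. vector_derivative \<gamma> (at t) \<bullet> \<nu> t = 0)
     \<and> (\<forall>t\<in>I. vector_derivative (\<lambda>s. (\<gamma> s, \<nu> s)) (at t) \<noteq> 0)"

definition ell :: "(real \<Rightarrow> real \<times> real) \<Rightarrow> real \<Rightarrow> real" where
  "ell \<nu> t = vector_derivative \<nu> (at t) \<bullet> rotM (\<nu> t)"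

fun betak :: "(real \<Rightarrow> real \<times> real) \<Rightarrow> (real \<Rightarrow> real \<times> real) \<Rightarrow> nat \<Rightarrow> real \<Rightarrow> real" where
  "betak \<gamma> \<nu> 0 t = vector_derivative \<gamma> (at t) \<bullet> rotM (\<nu> t)"
| "betak \<gamma> \<nu> (Suc k) t = deriv (\<lambda>s. betak \<gamma> \<nu> k s / ell \<nu> s) t"

fun Ev :: "(real \<Rightarrow> real \<times> real) \<Rightarrow> (real \<Rightarrow> real \<times> real) \<Rightarrow> nat \<Rightarrow> real \<Rightarrow> real \<times> real" where
  "Ev \<gamma> \<nu> 0 t = \<gamma> t"
| "Ev \<gamma> \<nu> (Suc k) t = Ev \<gamma> \<nu> k t - (betak \<gamma> \<nu> k t / ell \<nu> t) *\<^sub>R (rotM ^^ k) (\<nu> t)"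

end

theory Submission
  imports Defs
begin

text \<open>Write \<gamma> = \<Psi> \<circ> cusp n \<circ> \<phi> near 0 with diffeomorphisms \<phi> and \<Psi>. Then the velocity of \<gamma> is
  \<phi> ^ (n - 1) times a vector that does not vanish at 0, so betak 0 = \<gamma>' \<bullet> rotM \<nu> has a zero of exact
  order n - 1 at 0. The velocity of the k-th evolute is betak k times the unit vector
  (rotM ^^ Suc k) \<nu>, and betak (k + 1) is the derivative of betak k / ell, where ell does not
  vanish; hence betak k has a zero of exact order n - 1 - k. It therefore vanishes at 0 for
  1 \<le> k \<le> n - 2 but not for k = n - 1.\<close>

section \<open>Smooth real functions\<close>

definition deriv_closed :: "real set \<Rightarrow> (real \<Rightarrow> real) set \<Rightarrow> bool" where
  "deriv_closed J F \<longleftrightarrow> (\<forall>g\<in>F. \<exists>g'\<in>F. \<forall>x\<in>J. (g has_real_derivative g' x) (at x))"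

text \<open>A scalar counterpart of smooth_on phrased with has_real_derivative, for which closure under
  sums and products follows from the algebra generated by a derivative-closed family.\<close>
definition real_smooth_on :: "real set \<Rightarrow> (real \<Rightarrow> real) \<Rightarrow> bool" where
  "real_smooth_on J f \<longleftrightarrow> (\<exists>F. f \<in> F \<and> deriv_closed J F)"

inductive_set generated_algebra :: "(real \<Rightarrow> real) set \<Rightarrow> (real \<Rightarrow> real) set" for A where
  base: "f \<in> A \<Longrightarrow> f \<in> generated_algebra A"
| const: "(\<lambda>x. c) \<in> generated_algebra A"
| add: "f \<in> generated_algebra A \<Longrightarrow> g \<in> generated_algebra A \<Longrightarrow> (\<lambda>x. f x + g x) \<in> generated_algebra A"
| mult: "f \<in> generated_algebra A \<Longrightarrow> g \<in> generated_algebra A \<Longrightarrow> (\<lambda>x. f x * g x) \<in> generated_algebra A"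

lemma deriv_closed_generated_algebra:
  assumes "\<forall>g\<in>A. \<exists>g'\<in>generated_algebra A. \<forall>x\<in>J. (g has_real_derivative g' x) (at x)"
  shows "deriv_closed J (generated_algebra A)"
  unfolding deriv_closed_def
proof
  fix f assume "f \<in> generated_algebra A"
  then show "\<exists>f'\<in>generated_algebra A. \<forall>x\<in>J. (f has_real_derivative f' x) (at x)"
  proof induction
    case (base f)
    then show ?case using assms by blast
  next
    case (const c)
    show ?case by (rule bexI[of _ "\<lambda>x. 0"]) (auto intro: generated_algebra.const)
  next
    case (add f g)
    then obtain f' g' where "f' \<in> generated_algebra A" "g' \<in> generated_algebra A"
      "\<forall>x\<in>J. (f has_real_derivative f' x) (at x)" "\<forall>x\<in>J. (g has_real_derivative g' x) (at x)"
      by blast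
    then show ?case
      by (intro bexI[of _ "\<lambda>x. f' x + g' x"]) (auto intro: generated_algebra.add DERIV_add)
  next
    case (mult f g)
    then obtain f' g' where "f' \<in> generated_algebra A" "g' \<in> generated_algebra A"
      "\<forall>x\<in>J. (f has_real_derivative f' x) (at x)" "\<forall>x\<in>J. (g has_real_derivative g' x) (at x)"
      by blast
    with mult.hyps show ?case
      by (intro bexI[of _ "\<lambda>x. f' x * g x + g' x * f x"])
        (auto intro: generated_algebra.add generated_algebra.mult DERIV_mult)
  qed
qed

lemma real_smooth_on_generated_algebra:
  assumes "deriv_closed J F" "f \<in> generated_algebra F"
  shows "real_smooth_on J f"
proof -
  have "\<forall>g\<in>F. \<exists>g'\<in>generated_algebra F. \<forall>x\<in>J. (g has_real_derivative g' x) (at x)"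
    using assms(1) unfolding deriv_closed_def by (meson generated_algebra.base)
  then have "deriv_closed J (generated_algebra F)" by (rule deriv_closed_generated_algebra)
  then show ?thesis using assms(2) unfolding real_smooth_on_def by blast
qed

lemma real_smooth_on_common_family:
  assumes "real_smooth_on J f" "real_smooth_on J g"
  obtains F where "deriv_closed J F" "f \<in> F" "g \<in> F"
proof -
  obtain F G where "f \<in> F" "deriv_closed J F" "g \<in> G" "deriv_closed J G"
    using assms unfolding real_smooth_on_def by blast
  then have "deriv_closed J (F \<union> G)" "f \<in> F \<union> G" "g \<in> F \<union> G"
    unfolding deriv_closed_def by blast+
  then show thesis by (rule that)
qed

lemma real_smooth_on_add:
  assumes "real_smooth_on J f" "real_smooth_on J g"
  shows "real_smooth_on J (\<lambda>x. f x + g x)"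
  using assms by (rule real_smooth_on_common_family)
    (auto intro: real_smooth_on_generated_algebra generated_algebra.intros)

lemma real_smooth_on_mult:
  assumes "real_smooth_on J f" "real_smooth_on J g"
  shows "real_smooth_on J (\<lambda>x. f x * g x)"
  using assms by (rule real_smooth_on_common_family)
    (auto intro: real_smooth_on_generated_algebra generated_algebra.intros)

lemma real_smooth_on_const: "real_smooth_on J (\<lambda>x. c)"
  by (rule real_smooth_on_generated_algebra[of J "{}"])
    (auto simp: deriv_closed_def intro: generated_algebra.const)

lemma real_smooth_on_inverse:
  assumes "real_smooth_on J f" "\<forall>x\<in>J. f x \<noteq> 0"
  shows "real_smooth_on J (\<lambda>x. inverse (f x))"
proof -
  obtain F where F: "f \<in> F" "deriv_closed J F"
    using assms(1) unfolding real_smooth_on_def by blast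
  then obtain f' where f': "f' \<in> F" "\<forall>x\<in>J. (f has_real_derivative f' x) (at x)"
    unfolding deriv_closed_def by blast
  define A where "A = insert (\<lambda>x. inverse (f x)) F"
  define g' where "g' x = (- 1) * f' x * (inverse (f x) * inverse (f x))" for x
  have g'A: "g' \<in> generated_algebra A"
    using f'(1) unfolding A_def g'_def by (intro generated_algebra.intros) auto
  have "((\<lambda>x. inverse (f x)) has_real_derivative g' x) (at x)" if "x \<in> J" for x
    using DERIV_inverse_fun[of f "f' x" x] f'(2) assms(2) that
    by (simp add: g'_def power2_eq_square)
  with g'A have "\<exists>h'\<in>generated_algebra A. \<forall>x\<in>J. ((\<lambda>x. inverse (f x)) has_real_derivative h' x) (at x)"
    by blast
  moreover have "\<exists>h'\<in>generated_algebra A. \<forall>x\<in>J. (h has_real_derivative h' x) (at x)" if "h \<in> F" for h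
    using F(2) that unfolding A_def deriv_closed_def by (meson generated_algebra.base insertCI)
  ultimately have "deriv_closed J (generated_algebra A)"
    unfolding A_def by (intro deriv_closed_generated_algebra) blast
  moreover have "(\<lambda>x. inverse (f x)) \<in> generated_algebra A"
    unfolding A_def by (intro generated_algebra.base) simp
  ultimately show ?thesis unfolding real_smooth_on_def by blast
qed

lemma real_smooth_on_divide:
  assumes "real_smooth_on J f" "real_smooth_on J g" "\<forall>x\<in>J. g x \<noteq> 0"
  shows "real_smooth_on J (\<lambda>x. f x / g x)"
  using real_smooth_on_mult[OF assms(1) real_smooth_on_inverse[OF assms(2,3)]]
  by (simp add: divide_inverse)

lemma real_smooth_on_imp_has_real_derivative:
  assumes "real_smooth_on J f" "x \<in> J"
  shows "(f has_real_derivative deriv f x) (at x)"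
  using assms unfolding real_smooth_on_def deriv_closed_def by (metis DERIV_imp_deriv)

lemma real_smooth_on_cong:
  assumes "real_smooth_on J f" "open J" "\<And>x. x \<in> J \<Longrightarrow> g x = f x"
  shows "real_smooth_on J g"
proof -
  obtain F f' where F: "f \<in> F" "deriv_closed J F" "f' \<in> F"
    and f': "\<forall>x\<in>J. (f has_real_derivative f' x) (at x)"
    using assms(1) unfolding real_smooth_on_def deriv_closed_def by blast
  have "\<forall>x\<in>J. (g has_real_derivative f' x) (at x)"
    using f' assms(2,3) by (metis has_field_derivative_transform_within_open)
  then have "deriv_closed J (insert g F)"
    using F unfolding deriv_closed_def by blast
  then show ?thesis unfolding real_smooth_on_def by blast
qed

lemma real_smooth_on_deriv:
  assumes "real_smooth_on J f" "open J"
  shows "real_smooth_on J (deriv f)"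
proof -
  obtain F f' where F: "deriv_closed J F" "f' \<in> F"
    and f': "\<forall>x\<in>J. (f has_real_derivative f' x) (at x)"
    using assms(1) unfolding real_smooth_on_def deriv_closed_def by blast
  have "real_smooth_on J f'" using F unfolding real_smooth_on_def by blast
  then show ?thesis using assms(2) by (rule real_smooth_on_cong) (use f' DERIV_imp_deriv in blast)
qed

section \<open>Order of a zero at 0\<close>

definition zero_order :: "nat \<Rightarrow> (real \<Rightarrow> real) \<Rightarrow> bool" where
  "zero_order m f \<longleftrightarrow> (\<forall>i<m. (deriv ^^ i) f 0 = 0) \<and> (deriv ^^ m) f 0 \<noteq> 0"

lemma funpow_deriv_Suc: "(deriv ^^ i) (deriv f) = (deriv ^^ Suc i) f"
  by (simp add: funpow_Suc_right del: funpow.simps)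

lemma zero_order_deriv:
  assumes "zero_order (Suc m) f"
  shows "zero_order m (deriv f)"
  using assms unfolding zero_order_def funpow_deriv_Suc by auto

text \<open>L'Hospital's rule, applied m times.\<close>
lemma tendsto_div_power_higher_deriv:
  assumes "real_smooth_on J f" "open J" "0 \<in> J" "\<forall>i<m. (deriv ^^ i) f 0 = 0"
  shows "((\<lambda>t. f t / t ^ m) \<longlongrightarrow> (deriv ^^ m) f 0 / fact m) (at 0)"
  using assms
proof (induction m arbitrary: f)
  case 0
  then have "isCont f 0" using real_smooth_on_imp_has_real_derivative DERIV_isCont by blast
  then show ?case by (simp add: isContD)
next
  case (Suc m)
  have "(f \<longlongrightarrow> 0) (at 0)"
  proof -
    have "isCont f 0"
      using Suc.prems real_smooth_on_imp_has_real_derivative DERIV_isCont by blast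
    moreover have "f 0 = 0" using Suc.prems(4) by auto
    ultimately show ?thesis by (metis isContD)
  qed
  moreover have "((\<lambda>t::real. t ^ Suc m) \<longlongrightarrow> 0) (at 0)"
    by (intro tendsto_eq_intros) auto
  moreover have "\<forall>\<^sub>F t in at 0. t ^ Suc m \<noteq> (0::real)"
    using eventually_neq_at_within[of 0 0 UNIV] by (rule eventually_mono) simp
  moreover have "\<forall>\<^sub>F t in at 0. real (Suc m) * t ^ m \<noteq> (0::real)"
    using eventually_neq_at_within[of 0 0 UNIV] by (rule eventually_mono) simp
  moreover have "\<forall>\<^sub>F t in at 0. (f has_real_derivative deriv f t) (at t)"
    using eventually_at_in_open'[OF Suc.prems(2,3)] Suc.prems(1)
    by (auto elim!: eventually_mono intro: real_smooth_on_imp_has_real_derivative)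
  moreover have "\<forall>\<^sub>F t in at 0. ((\<lambda>t. t ^ Suc m) has_real_derivative real (Suc m) * t ^ m) (at t)"
    using DERIV_pow[of "Suc m"] by (intro always_eventually) simp
  moreover have "((\<lambda>t. deriv f t / t ^ m) \<longlongrightarrow> (deriv ^^ Suc m) f 0 / fact m) (at 0)"
    using Suc.IH[of "deriv f"] Suc.prems real_smooth_on_deriv
    by (simp add: funpow_deriv_Suc del: funpow.simps)
  then have "((\<lambda>t. (deriv f t / t ^ m) / real (Suc m))
      \<longlongrightarrow> ((deriv ^^ Suc m) f 0 / fact m) / real (Suc m)) (at 0)"
    by (rule tendsto_divide[OF _ tendsto_const]) simp
  then have "((\<lambda>t. deriv f t / (real (Suc m) * t ^ m)) \<longlongrightarrow> (deriv ^^ Suc m) f 0 / fact (Suc m)) (at 0)"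
    by (simp only: divide_divide_eq_left fact_Suc of_nat_mult mult.commute)
  ultimately show ?case by (rule lhopital)
qed

lemma zero_order_iff_tendsto_div_power:
  assumes "real_smooth_on J f" "open J" "0 \<in> J"
  shows "zero_order m f \<longleftrightarrow> (\<exists>c. c \<noteq> 0 \<and> ((\<lambda>t. f t / t ^ m) \<longlongrightarrow> c) (at 0))"
proof
  assume "zero_order m f"
  then show "\<exists>c. c \<noteq> 0 \<and> ((\<lambda>t. f t / t ^ m) \<longlongrightarrow> c) (at 0)"
    using tendsto_div_power_higher_deriv[OF assms] unfolding zero_order_def
    by (intro exI[of _ "(deriv ^^ m) f 0 / fact m"]) auto
next
  assume "\<exists>c. c \<noteq> 0 \<and> ((\<lambda>t. f t / t ^ m) \<longlongrightarrow> c) (at 0)"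
  then obtain c where c: "c \<noteq> 0" "((\<lambda>t. f t / t ^ m) \<longlongrightarrow> c) (at 0)" by blast
  show "zero_order m f"
  proof (cases "\<exists>i<m. (deriv ^^ i) f 0 \<noteq> 0")
    case True
    text \<open>At the first nonvanishing derivative, of order i < m, f t / t ^ i tends both to a nonzero
      value and to 0 (being t ^ (m - i) times a convergent quantity).\<close>
    then obtain i where i: "i < m" "(deriv ^^ i) f 0 \<noteq> 0" "\<forall>j<i. (deriv ^^ j) f 0 = 0"
      using exists_least_iff[of "\<lambda>i. i < m \<and> (deriv ^^ i) f 0 \<noteq> 0"] by (metis order.strict_trans)
    have "((\<lambda>t. t ^ (m - i) * (f t / t ^ m)) \<longlongrightarrow> 0 ^ (m - i) * c) (at 0)"
      by (intro tendsto_intros c(2))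
    then have "((\<lambda>t. t ^ (m - i) * (f t / t ^ m)) \<longlongrightarrow> 0) (at 0)" using i(1) by (simp add: zero_power)
    moreover have "\<forall>\<^sub>F t in at 0. t ^ (m - i) * (f t / t ^ m) = f t / t ^ i"
      using i(1) by (auto simp: eventually_at_filter power_diff field_simps)
    ultimately have "((\<lambda>t. f t / t ^ i) \<longlongrightarrow> 0) (at 0)" by (rule Lim_transform_eventually)
    with tendsto_div_power_higher_deriv[OF assms i(3)] have "(deriv ^^ i) f 0 / fact i = 0"
      using tendsto_unique[OF at_neq_bot] by blast
    with i(2) show ?thesis by simp
  next
    case False
    then have "\<forall>i<m. (deriv ^^ i) f 0 = 0" by blast
    moreover from tendsto_div_power_higher_deriv[OF assms this] c
    have "(deriv ^^ m) f 0 / fact m = c" using tendsto_unique[OF at_neq_bot] by blast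
    ultimately show ?thesis using c(1) unfolding zero_order_def by auto
  qed
qed

lemma zero_order_divide:
  assumes "real_smooth_on J f" "real_smooth_on J g" "open J" "0 \<in> J" "\<forall>x\<in>J. g x \<noteq> 0"
    and "zero_order m f"
  shows "zero_order m (\<lambda>t. f t / g t)"
proof -
  obtain c where c: "c \<noteq> 0" "((\<lambda>t. f t / t ^ m) \<longlongrightarrow> c) (at 0)"
    using assms(6) zero_order_iff_tendsto_div_power[OF assms(1,3,4)] by blast
  have "(g \<longlongrightarrow> g 0) (at 0)"
    using real_smooth_on_imp_has_real_derivative[OF assms(2,4)] DERIV_isCont isContD by blast
  then have "((\<lambda>t. (f t / t ^ m) / g t) \<longlongrightarrow> c / g 0) (at 0)"
    using c(2) assms(4,5) by (intro tendsto_divide) auto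
  then have "((\<lambda>t. (f t / g t) / t ^ m) \<longlongrightarrow> c / g 0) (at 0)"
    by (simp add: field_simps)
  moreover have "c / g 0 \<noteq> 0" using c(1) assms(4,5) by simp
  ultimately show ?thesis
    using zero_order_iff_tendsto_div_power[OF real_smooth_on_divide[OF assms(1,2,5)] assms(3,4)] by blast
qed

section \<open>Smooth plane curves and the rotation rotM\<close>

lemma has_derivative_imp_has_vector_derivative:
  fixes f :: "real \<Rightarrow> 'b::real_normed_vector"
  assumes "(f has_derivative D) F"
  shows "(f has_vector_derivative D 1) F"
proof -
  have "D h = h *\<^sub>R D 1" for h
    using linear_scale[OF has_derivative_linear[OF assms], of h 1] by simp
  then have "D = (\<lambda>h. h *\<^sub>R D 1)" by (rule ext)
  with assms show ?thesis unfolding has_vector_derivative_def by simp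
qed

lemma smooth_on_has_derivative:
  assumes "smooth_on S f"
  obtains Df where "\<forall>x\<in>S. (f has_derivative Df x) (at x)" "\<forall>v. smooth_on S (\<lambda>x. Df x v)"
proof -
  obtain F where F: "f \<in> F"
    "\<forall>g\<in>F. \<exists>g'. (\<forall>x\<in>S. (g has_derivative g' x) (at x)) \<and> (\<forall>v. (\<lambda>x. g' x v) \<in> F)"
    using assms unfolding smooth_on_def by blast
  then obtain Df where "\<forall>x\<in>S. (f has_derivative Df x) (at x)" "\<forall>v. (\<lambda>x. Df x v) \<in> F"
    by blast
  moreover from this(2) F(2) have "\<forall>v. smooth_on S (\<lambda>x. Df x v)"
    unfolding smooth_on_def by blast
  ultimately show thesis using that by blast
qed

lemma smooth_on_has_vector_derivative:
  fixes f :: "real \<Rightarrow> 'b::real_normed_vector"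
  assumes "smooth_on S f"
  obtains f' where "\<forall>x\<in>S. (f has_vector_derivative f' x) (at x)" "smooth_on S f'"
proof -
  obtain Df where "\<forall>x\<in>S. (f has_derivative Df x) (at x)" "\<forall>v. smooth_on S (\<lambda>x. Df x v)"
    by (rule smooth_on_has_derivative[OF assms])
  then show thesis
    by (intro that[of "\<lambda>x. Df x 1"]) (auto intro: has_derivative_imp_has_vector_derivative)
qed

lemma smooth_on_isCont:
  assumes "smooth_on S f" "x \<in> S"
  shows "isCont f x"
proof -
  obtain Df where "\<forall>x\<in>S. (f has_derivative Df x) (at x)"
    using smooth_on_has_derivative[OF assms(1)] by blast
  with assms(2) show ?thesis using has_derivative_continuous by blast
qed

lemma smooth_on_imp_real_smooth_on_fst_snd:
  fixes f :: "real \<Rightarrow> real \<times> real"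
  assumes "smooth_on S f"
  shows "real_smooth_on S (\<lambda>x. fst (f x))" "real_smooth_on S (\<lambda>x. snd (f x))"
proof -
  obtain F where F: "f \<in> F"
    "\<forall>g\<in>F. \<exists>g'. (\<forall>x\<in>S. (g has_derivative g' x) (at x)) \<and> (\<forall>v. (\<lambda>x. g' x v) \<in> F)"
    using assms unfolding smooth_on_def by blast
  define A where "A = (\<lambda>g x. fst (g x)) ` F \<union> (\<lambda>g x. snd (g x)) ` F"
  have "\<exists>h'\<in>A. \<forall>x\<in>S. (h has_real_derivative h' x) (at x)" if "h \<in> A" for h
  proof -
    obtain g where g: "g \<in> F" "h = (\<lambda>x. fst (g x)) \<or> h = (\<lambda>x. snd (g x))"
      using \<open>h \<in> A\<close> unfolding A_def by blast
    then obtain Dg where Dg: "\<forall>x\<in>S. (g has_derivative Dg x) (at x)" "(\<lambda>x. Dg x 1) \<in> F"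
      using F(2) by blast
    then have "\<forall>x\<in>S. (g has_vector_derivative Dg x 1) (at x)"
      by (blast intro: has_derivative_imp_has_vector_derivative)
    then have "\<forall>x\<in>S. ((\<lambda>x. fst (g x)) has_real_derivative fst (Dg x 1)) (at x)
        \<and> ((\<lambda>x. snd (g x)) has_real_derivative snd (Dg x 1)) (at x)"
      unfolding has_real_derivative_iff_has_vector_derivative has_vector_derivative_def
      by (auto intro!: derivative_eq_intros)
    moreover have "(\<lambda>x. fst (Dg x 1)) \<in> A" "(\<lambda>x. snd (Dg x 1)) \<in> A"
      using imageI[OF Dg(2), of "\<lambda>g x. fst (g x)"] imageI[OF Dg(2), of "\<lambda>g x. snd (g x)"]
      unfolding A_def by auto
    ultimately show ?thesis using g(2) by (metis (no_types, lifting))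
  qed
  then have "deriv_closed S A" unfolding deriv_closed_def by blast
  moreover have "(\<lambda>x. fst (f x)) \<in> A" "(\<lambda>x. snd (f x)) \<in> A" using F(1) unfolding A_def by blast+
  ultimately show "real_smooth_on S (\<lambda>x. fst (f x))" "real_smooth_on S (\<lambda>x. snd (f x))"
    unfolding real_smooth_on_def by blast+
qed

lemma inner_rotM: "a \<bullet> rotM b = snd a * fst b - fst a * snd b"
  by (cases a; cases b) (simp add: rotM_def)

lemma real_smooth_on_inner_rotM:
  assumes "smooth_on S f" "smooth_on S g"
  shows "real_smooth_on S (\<lambda>x. f x \<bullet> rotM (g x))"
proof -
  have "real_smooth_on S (\<lambda>x. snd (f x) * fst (g x) + (- 1) * (fst (f x) * snd (g x)))"
    using smooth_on_imp_real_smooth_on_fst_snd[OF assms(1)] smooth_on_imp_real_smooth_on_fst_snd[OF assms(2)]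
    by (intro real_smooth_on_add real_smooth_on_mult real_smooth_on_const)
  then show ?thesis by (simp add: inner_rotM)
qed

lemma rotM_scaleR: "rotM (c *\<^sub>R v) = c *\<^sub>R rotM v"
  by (simp add: rotM_def)

lemma rotM_rotM: "rotM (rotM v) = - v"
  by (cases v) (simp add: rotM_def)

lemma norm_rotM: "norm (rotM v) = norm v"
  by (cases v) (simp add: rotM_def norm_Pair add.commute)

lemma inner_rotM_self: "rotM v \<bullet> v = 0" "rotM v \<bullet> rotM v = (norm v)\<^sup>2"
  by (cases v; simp add: rotM_def norm_Pair power2_eq_square)+

lemma bounded_linear_rotM: "bounded_linear rotM"
proof -
  have "rotM = (\<lambda>v. (- snd v, fst v))" by (simp add: rotM_def fun_eq_iff)
  moreover have "bounded_linear (\<lambda>v::real \<times> real. (- snd v, fst v))"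
    by (intro bounded_linear_Pair bounded_linear_minus bounded_linear_fst bounded_linear_snd)
  ultimately show ?thesis by simp
qed

lemma funpow_rotM_scaleR: "(rotM ^^ k) (c *\<^sub>R v) = c *\<^sub>R (rotM ^^ k) v"
  by (induction k) (auto simp: rotM_scaleR)

lemma funpow_rotM_uminus: "(rotM ^^ k) (- v) = - (rotM ^^ k) v"
  by (induction k) (simp_all add: rotM_def)

lemma norm_funpow_rotM: "norm ((rotM ^^ k) v) = norm v"
  by (induction k) (auto simp: norm_rotM)

lemma has_vector_derivative_funpow_rotM:
  assumes "(f has_vector_derivative f') (at t)"
  shows "((\<lambda>s. (rotM ^^ k) (f s)) has_vector_derivative (rotM ^^ k) f') (at t)"
  by (induction k) (simp_all add: assms bounded_linear.has_vector_derivative[OF bounded_linear_rotM])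

lemma orthogonal_unit_eq_scaleR_rotM:
  fixes v u :: "real \<times> real"
  assumes "norm u = 1" "v \<bullet> u = 0"
  shows "v = (v \<bullet> rotM u) *\<^sub>R rotM u"
proof -
  obtain a b x y where u: "u = (a, b)" and v: "v = (x, y)" by (cases u, cases v)
  have unit: "a\<^sup>2 + b\<^sup>2 = 1" using assms(1) u by (simp add: norm_Pair)
  have orth: "x * a + y * b = 0" using assms(2) u v by simp
  have "x = (y * a - x * b) * (- b)"
  proof -
    have "x = x * (a\<^sup>2 + b\<^sup>2)" using unit by simp
    also have "\<dots> = (y * a - x * b) * (- b) + a * (x * a + y * b)"
      by (simp add: algebra_simps power2_eq_square)
    finally show ?thesis using orth by simp
  qed
  moreover have "y = (y * a - x * b) * a"
  proof -
    have "y = y * (a\<^sup>2 + b\<^sup>2)" using unit by simp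
    also have "\<dots> = (y * a - x * b) * a + b * (x * a + y * b)"
      by (simp add: algebra_simps power2_eq_square)
    finally show ?thesis using orth by simp
  qed
  ultimately show ?thesis using u v by (simp add: rotM_def)
qed

lemma has_derivative_left_inverse:
  assumes "(f has_derivative Df) (at x)" "(g has_derivative Dg) (at (f x))" "open S" "x \<in> S"
    and "\<And>y. y \<in> S \<Longrightarrow> g (f y) = y"
  shows "Dg (Df h) = h"
proof -
  have "((\<lambda>y. g (f y)) has_derivative (\<lambda>h. Dg (Df h))) (at x)"
    by (rule has_derivative_compose[OF assms(1,2)])
  then have "((\<lambda>y. y) has_derivative (\<lambda>h. Dg (Df h))) (at x)"
    by (rule has_derivative_transform_within_open[OF _ assms(3,4)]) (use assms(5) in auto)
  then have "(\<lambda>h. Dg (Df h)) = (\<lambda>h. h)"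
    using has_derivative_unique has_derivative_ident by blast
  then show ?thesis by metis
qed

section \<open>Fronts and their evolutes\<close>

lemma betak_Suc: "betak \<gamma> \<nu> (Suc k) = deriv (\<lambda>s. betak \<gamma> \<nu> k s / ell \<nu> s)"
  by (rule ext) simp

locale front_without_inflections =
  fixes I :: "real set" and \<gamma> \<nu> :: "real \<Rightarrow> real \<times> real"
  assumes open_I: "open I"
    and legendre: "legendre_immersion_on I \<gamma> \<nu>"
    and ell_nonzero: "\<forall>t\<in>I. ell \<nu> t \<noteq> 0"
begin

lemma smooth_\<gamma>: "smooth_on I \<gamma>" and smooth_\<nu>: "smooth_on I \<nu>"
  and norm_\<nu>: "t \<in> I \<Longrightarrow> norm (\<nu> t) = 1"
  and velocity_orthogonal: "t \<in> I \<Longrightarrow> vector_derivative \<gamma> (at t) \<bullet> \<nu> t = 0"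
  using legendre unfolding legendre_immersion_on_def by auto

lemma \<nu>_has_vector_derivative:
  assumes "t \<in> I"
  shows "(\<nu> has_vector_derivative ell \<nu> t *\<^sub>R rotM (\<nu> t)) (at t)"
proof -
  obtain \<nu>' where \<nu>': "(\<nu> has_vector_derivative \<nu>') (at t)"
    using smooth_on_has_vector_derivative[OF smooth_\<nu>] assms by metis
  text \<open>Differentiating the constant \<nu> \<bullet> \<nu> = 1 shows \<nu>' \<bullet> \<nu> = 0.\<close>
  have "((\<lambda>s. \<nu> s \<bullet> \<nu> s) has_vector_derivative \<nu> t \<bullet> \<nu>' + \<nu>' \<bullet> \<nu> t) (at t)"
    using bounded_bilinear.has_vector_derivative[OF bounded_bilinear_inner \<nu>' \<nu>'] .
  moreover have "((\<lambda>s. \<nu> s \<bullet> \<nu> s) has_vector_derivative 0) (at t)"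
  proof (rule has_vector_derivative_transform_within_open[OF _ open_I assms])
    show "((\<lambda>s. 1) has_vector_derivative 0) (at t)" by simp
    show "1 = \<nu> s \<bullet> \<nu> s" if "s \<in> I" for s
      using norm_\<nu>[OF that] by (metis power2_norm_eq_inner power_one)
  qed
  ultimately have "\<nu>' \<bullet> \<nu> t = 0"
    using vector_derivative_unique_at by (fastforce simp: inner_commute)
  then have "\<nu>' = ell \<nu> t *\<^sub>R rotM (\<nu> t)"
    using orthogonal_unit_eq_scaleR_rotM[OF norm_\<nu>[OF assms]] vector_derivative_at[OF \<nu>']
    unfolding ell_def by metis
  with \<nu>' show ?thesis by simp
qed

lemma \<gamma>_has_vector_derivative:
  assumes "t \<in> I"
  shows "(\<gamma> has_vector_derivative betak \<gamma> \<nu> 0 t *\<^sub>R rotM (\<nu> t)) (at t)"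
proof -
  obtain \<gamma>' where \<gamma>': "(\<gamma> has_vector_derivative \<gamma>') (at t)"
    using smooth_on_has_vector_derivative[OF smooth_\<gamma>] assms by metis
  then have "\<gamma>' \<bullet> \<nu> t = 0"
    using velocity_orthogonal[OF assms] vector_derivative_at by metis
  then have "\<gamma>' = betak \<gamma> \<nu> 0 t *\<^sub>R rotM (\<nu> t)"
    using orthogonal_unit_eq_scaleR_rotM[OF norm_\<nu>[OF assms]] vector_derivative_at[OF \<gamma>'] by simp
  with \<gamma>' show ?thesis by simp
qed

lemma real_smooth_on_ell: "real_smooth_on I (ell \<nu>)"
proof -
  obtain \<nu>' where \<nu>': "\<forall>t\<in>I. (\<nu> has_vector_derivative \<nu>' t) (at t)" "smooth_on I \<nu>'"
    using smooth_on_has_vector_derivative[OF smooth_\<nu>] by metis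
  show ?thesis
    using real_smooth_on_inner_rotM[OF \<nu>'(2) smooth_\<nu>] open_I
    by (rule real_smooth_on_cong) (simp add: ell_def vector_derivative_at[OF \<nu>'(1)[rule_format]])
qed

lemma real_smooth_on_betak: "real_smooth_on I (betak \<gamma> \<nu> k)"
proof (induction k)
  case 0
  obtain \<gamma>' where \<gamma>': "\<forall>t\<in>I. (\<gamma> has_vector_derivative \<gamma>' t) (at t)" "smooth_on I \<gamma>'"
    using smooth_on_has_vector_derivative[OF smooth_\<gamma>] by metis
  show ?case
    using real_smooth_on_inner_rotM[OF \<gamma>'(2) smooth_\<nu>] open_I
    by (rule real_smooth_on_cong) (simp add: vector_derivative_at[OF \<gamma>'(1)[rule_format]])
next
  case (Suc k)
  have "real_smooth_on I (deriv (\<lambda>s. betak \<gamma> \<nu> k s / ell \<nu> s))"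
    using Suc real_smooth_on_ell ell_nonzero open_I
    by (intro real_smooth_on_deriv real_smooth_on_divide)
  then show ?case by (simp only: betak_Suc)
qed

lemma Ev_has_vector_derivative:
  assumes "t \<in> I"
  shows "(Ev \<gamma> \<nu> k has_vector_derivative betak \<gamma> \<nu> k t *\<^sub>R (rotM ^^ Suc k) (\<nu> t)) (at t)"
proof (induction k)
  case 0
  then show ?case using \<gamma>_has_vector_derivative[OF assms] by simp
next
  case (Suc k)
  have quotient: "((\<lambda>s. betak \<gamma> \<nu> k s / ell \<nu> s) has_real_derivative betak \<gamma> \<nu> (Suc k) t) (at t)"
    using real_smooth_on_imp_has_real_derivative[OF
        real_smooth_on_divide[OF real_smooth_on_betak real_smooth_on_ell ell_nonzero] assms]
    by (simp only: betak_Suc)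
  have "(Ev \<gamma> \<nu> (Suc k) has_vector_derivative
     betak \<gamma> \<nu> k t *\<^sub>R (rotM ^^ Suc k) (\<nu> t) -
     ((betak \<gamma> \<nu> k t / ell \<nu> t) *\<^sub>R (rotM ^^ k) (ell \<nu> t *\<^sub>R rotM (\<nu> t))
      + betak \<gamma> \<nu> (Suc k) t *\<^sub>R (rotM ^^ k) (\<nu> t))) (at t)"
    unfolding Ev.simps[abs_def]
    by (intro has_vector_derivative_diff Suc has_vector_derivative_scaleR quotient
        has_vector_derivative_funpow_rotM \<nu>_has_vector_derivative assms)
  text \<open>The terms in the direction (rotM ^^ Suc k) (\<nu> t) cancel.\<close>
  also have "betak \<gamma> \<nu> k t *\<^sub>R (rotM ^^ Suc k) (\<nu> t) -
     ((betak \<gamma> \<nu> k t / ell \<nu> t) *\<^sub>R (rotM ^^ k) (ell \<nu> t *\<^sub>R rotM (\<nu> t))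
      + betak \<gamma> \<nu> (Suc k) t *\<^sub>R (rotM ^^ k) (\<nu> t))
     = betak \<gamma> \<nu> (Suc k) t *\<^sub>R (rotM ^^ Suc (Suc k)) (\<nu> t)"
    using ell_nonzero assms
    by (simp add: funpow_rotM_scaleR funpow_rotM_uminus rotM_rotM funpow_Suc_right del: funpow.simps)
  finally show ?case .
qed

lemma vector_derivative_Ev_eq_0_iff:
  assumes "t \<in> I"
  shows "vector_derivative (Ev \<gamma> \<nu> k) (at t) = 0 \<longleftrightarrow> betak \<gamma> \<nu> k t = 0"
proof -
  have "(rotM ^^ Suc k) (\<nu> t) \<noteq> 0"
    using norm_funpow_rotM norm_\<nu>[OF assms] by (metis norm_zero zero_neq_one)
  then show ?thesis using vector_derivative_at[OF Ev_has_vector_derivative[OF assms]] by simp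
qed

lemma zero_order_betak:
  assumes "0 \<in> I" "zero_order m (betak \<gamma> \<nu> 0)" "k \<le> m"
  shows "zero_order (m - k) (betak \<gamma> \<nu> k)"
  using assms(3)
proof (induction k)
  case 0
  show ?case using assms(2) by (simp only: diff_zero)
next
  case (Suc k)
  then have "zero_order (Suc (m - Suc k)) (betak \<gamma> \<nu> k)"
    by (simp add: Suc_diff_Suc)
  then have "zero_order (Suc (m - Suc k)) (\<lambda>s. betak \<gamma> \<nu> k s / ell \<nu> s)"
    by (rule zero_order_divide[OF real_smooth_on_betak real_smooth_on_ell open_I assms(1) ell_nonzero])
  then show ?case unfolding betak_Suc by (rule zero_order_deriv)
qed

lemma zero_order_betak_0:
  assumes "0 \<in> I" "open U" "0 \<in> U"
    and velocity: "\<forall>t\<in>U - {0}. (\<gamma> has_vector_derivative t ^ m *\<^sub>R v t) (at t)"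
    and "(v \<longlongrightarrow> c) (at 0)" "c \<noteq> 0"
  shows "zero_order m (betak \<gamma> \<nu> 0)"
proof -
  have v_eq: "v t = (betak \<gamma> \<nu> 0 t / t ^ m) *\<^sub>R rotM (\<nu> t)" if t: "t \<in> U \<inter> I - {0}" for t
  proof -
    have "t ^ m *\<^sub>R v t = betak \<gamma> \<nu> 0 t *\<^sub>R rotM (\<nu> t)"
      using vector_derivative_unique_at velocity \<gamma>_has_vector_derivative t by blast
    moreover have "v t = inverse (t ^ m) *\<^sub>R (t ^ m *\<^sub>R v t)" using t by simp
    ultimately show ?thesis by (simp add: divide_inverse_commute del: betak.simps)
  qed
  have unit_rotM: "rotM (\<nu> t) \<bullet> rotM (\<nu> t) = 1" if "t \<in> I" for t
    using inner_rotM_self(2) norm_\<nu>[OF that] by simp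
  have near_0: "\<forall>\<^sub>F t in at 0. t \<in> U \<inter> I - {0}"
    using eventually_at_in_open[of "U \<inter> I" 0] open_I assms(1-3) by blast
  have \<nu>_cont: "(\<nu> \<longlongrightarrow> \<nu> 0) (at 0)"
    using smooth_on_isCont[OF smooth_\<nu> assms(1)] by (rule isContD)
  text \<open>The limit c inherits orthogonality to \<nu>, so its rotM (\<nu> 0)-component is nonzero.\<close>
  have "((\<lambda>t. v t \<bullet> \<nu> t) \<longlongrightarrow> c \<bullet> \<nu> 0) (at 0)"
    using assms(5) \<nu>_cont by (rule tendsto_inner)
  moreover have "\<forall>\<^sub>F t in at 0. v t \<bullet> \<nu> t = 0"
    using near_0 by (rule eventually_mono) (simp add: v_eq inner_rotM_self(1))
  ultimately have "c \<bullet> \<nu> 0 = 0"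
    using tendsto_unique[OF at_neq_bot] tendsto_eventually by (metis (mono_tags))
  then have c_rotM: "c \<bullet> rotM (\<nu> 0) \<noteq> 0"
    using orthogonal_unit_eq_scaleR_rotM[OF norm_\<nu>[OF assms(1)], of c] \<open>c \<noteq> 0\<close>
    by (metis scaleR_zero_left)
  have "((\<lambda>t. v t \<bullet> rotM (\<nu> t)) \<longlongrightarrow> c \<bullet> rotM (\<nu> 0)) (at 0)"
    using assms(5) bounded_linear.tendsto[OF bounded_linear_rotM \<nu>_cont] by (rule tendsto_inner)
  moreover have "\<forall>\<^sub>F t in at 0. v t \<bullet> rotM (\<nu> t) = betak \<gamma> \<nu> 0 t / t ^ m"
    using near_0 by (rule eventually_mono) (simp add: v_eq unit_rotM)
  ultimately have "((\<lambda>t. betak \<gamma> \<nu> 0 t / t ^ m) \<longlongrightarrow> c \<bullet> rotM (\<nu> 0)) (at 0)"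
    by (rule Lim_transform_eventually)
  with c_rotM show ?thesis
    using zero_order_iff_tendsto_div_power[OF real_smooth_on_betak open_I assms(1)] by blast
qed

end

section \<open>Curves A-equivalent to a cusp\<close>

lemma diffeo_on_has_derivative_inj:
  assumes "diffeo_on U V \<phi>" "x \<in> U" "(\<phi> has_derivative D) (at x)" "D h = 0"
  shows "h = 0"
proof -
  have "open U" "\<phi> x \<in> V" "inj_on \<phi> U" "smooth_on V (inv_into U \<phi>)"
    using assms(1,2) unfolding diffeo_on_def by auto
  then obtain D' where "(inv_into U \<phi> has_derivative D') (at (\<phi> x))"
    by (metis smooth_on_has_derivative)
  then have "D' (D h) = h"
    using has_derivative_left_inverse[OF assms(3) _ \<open>open U\<close> assms(2)] \<open>inj_on \<phi> U\<close> by auto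
  moreover have "D' 0 = 0"
    using \<open>(inv_into U \<phi> has_derivative D') _\<close> has_derivative_linear linear_0 by blast
  ultimately show ?thesis using assms(4) by simp
qed

lemma diffeo_on_inv_has_derivative_inj:
  assumes "diffeo_on U V \<Phi>" "y \<in> V" "(inv_into U \<Phi> has_derivative D) (at y)" "D h = 0"
  shows "h = 0"
proof -
  have "open V" "\<Phi> ` U = V" "smooth_on U \<Phi>"
    using assms(1) unfolding diffeo_on_def by auto
  moreover from this have "inv_into U \<Phi> y \<in> U"
    using assms(2) by (metis inv_into_into)
  ultimately obtain D' where "(\<Phi> has_derivative D') (at (inv_into U \<Phi> y))"
    by (metis smooth_on_has_derivative)
  then have "D' (D h) = h"
    using has_derivative_left_inverse[OF assms(3) _ \<open>open V\<close> assms(2)] \<open>\<Phi> ` U = V\<close>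
    by (auto simp: f_inv_into_f)
  moreover have "D' 0 = 0"
    using \<open>(\<Phi> has_derivative D') _\<close> has_derivative_linear linear_0 by blast
  ultimately show ?thesis using assms(4) by simp
qed

lemma cusp_0: "n \<ge> 1 \<Longrightarrow> cusp n 0 = 0"
  by (simp add: cusp_def zero_prod_def)

lemma has_vector_derivative_comp_cusp:
  assumes "n \<ge> 1" "(\<phi> has_real_derivative \<phi>') (at t)"
    and "(\<Psi> has_derivative D\<Psi>) (at (cusp n (\<phi> t)))"
  shows "((\<lambda>s. \<Psi> (cusp n (\<phi> s))) has_vector_derivative
    \<phi> t ^ (n - 1) *\<^sub>R (\<phi>' *\<^sub>R (real n *\<^sub>R D\<Psi> (1, 0) + (real (n + 1) * \<phi> t) *\<^sub>R D\<Psi> (0, 1)))) (at t)"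
proof -
  have lin: "linear D\<Psi>" using assms(3) by (rule has_derivative_linear)
  have "((\<lambda>s. cusp n (\<phi> s)) has_vector_derivative
      (real n * (\<phi>' * \<phi> t ^ (n - 1)), real (n + 1) * (\<phi>' * \<phi> t ^ n))) (at t)"
    unfolding cusp_def using DERIV_power[OF assms(2), of n] DERIV_power[OF assms(2), of "n + 1"]
    by (intro has_vector_derivative_Pair) (simp_all add: has_real_derivative_iff_has_vector_derivative)
  also have "(real n * (\<phi>' * \<phi> t ^ (n - 1)), real (n + 1) * (\<phi>' * \<phi> t ^ n))
      = \<phi> t ^ (n - 1) *\<^sub>R (\<phi>' *\<^sub>R (real n *\<^sub>R (1, 0) + (real (n + 1) * \<phi> t) *\<^sub>R (0, 1)))"
    using assms(1) by (simp add: power_eq_if[of _ n])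
  finally have cusp_derivative: "((\<lambda>s. cusp n (\<phi> s)) has_vector_derivative
      \<phi> t ^ (n - 1) *\<^sub>R (\<phi>' *\<^sub>R (real n *\<^sub>R (1, 0) + (real (n + 1) * \<phi> t) *\<^sub>R (0, 1)))) (at t)" .
  have "(\<Psi> has_derivative D\<Psi>) (at (cusp n (\<phi> t)) within range (\<lambda>s. cusp n (\<phi> s)))"
    using assms(3) by (rule has_derivative_at_withinI)
  from vector_derivative_diff_chain_within[OF cusp_derivative this]
  have "((\<lambda>s. \<Psi> (cusp n (\<phi> s))) has_vector_derivative
      D\<Psi> (\<phi> t ^ (n - 1) *\<^sub>R (\<phi>' *\<^sub>R (real n *\<^sub>R (1, 0) + (real (n + 1) * \<phi> t) *\<^sub>R (0, 1))))) (at t)"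
    by (simp add: o_def)
  then show ?thesis by (simp only: linear_add[OF lin] linear_scale[OF lin])
qed

lemma A_equivalent_at_cusp_decompose:
  fixes \<gamma> :: "real \<Rightarrow> real \<times> real"
  assumes "n \<ge> 1" "A_equivalent_at \<gamma> 0 (cusp n) 0"
  obtains U V \<phi> \<phi>' \<Psi> where "open U" "0 \<in> U" "\<phi> 0 = 0"
    "\<forall>t\<in>U. (\<phi> has_real_derivative \<phi>' t) (at t)" "smooth_on U \<phi>'" "\<phi>' 0 \<noteq> 0"
    "\<forall>t\<in>U. cusp n (\<phi> t) \<in> V \<and> \<Psi> (cusp n (\<phi> t)) = \<gamma> t"
    "smooth_on V \<Psi>" "\<forall>D. (\<Psi> has_derivative D) (at 0) \<longrightarrow> D (1, 0) \<noteq> 0"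
proof -
  obtain U V \<phi> U' V' \<Phi> where \<phi>: "diffeo_on U V \<phi>" "0 \<in> U" "\<phi> 0 = 0"
    and \<Phi>: "diffeo_on U' V' \<Phi>"
    and factor: "\<forall>t\<in>U. \<gamma> t \<in> U' \<and> \<Phi> (\<gamma> t) = cusp n (\<phi> t)"
    using assms(2) unfolding A_equivalent_at_def by blast
  define \<Psi> where "\<Psi> = inv_into U' \<Phi>"
  have "open U" "smooth_on U \<phi>"
    using \<phi>(1) unfolding diffeo_on_def by auto
  have "\<Phi> ` U' = V'" "inj_on \<Phi> U'" "smooth_on V' \<Psi>"
    using \<Phi> unfolding diffeo_on_def \<Psi>_def by auto
  have through_V': "\<forall>t\<in>U. cusp n (\<phi> t) \<in> V' \<and> \<Psi> (cusp n (\<phi> t)) = \<gamma> t"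
    using factor \<open>\<Phi> ` U' = V'\<close> \<open>inj_on \<Phi> U'\<close> unfolding \<Psi>_def by (metis imageI inv_into_f_f)
  obtain \<phi>' where \<phi>': "\<forall>t\<in>U. (\<phi> has_real_derivative \<phi>' t) (at t)" "smooth_on U \<phi>'"
    using smooth_on_has_vector_derivative[OF \<open>smooth_on U \<phi>\<close>]
    unfolding has_real_derivative_iff_has_vector_derivative by metis
  have "\<phi>' 0 \<noteq> 0"
    using diffeo_on_has_derivative_inj[OF \<phi>(1,2), of "(*) (\<phi>' 0)" 1] \<phi>'(1) \<phi>(2)
    by (auto simp: has_field_derivative_def)
  moreover have "D (1, 0) \<noteq> 0" if "(\<Psi> has_derivative D) (at 0)" for D
  proof -
    have "0 \<in> V'" using through_V' \<phi>(2,3) cusp_0[OF assms(1)] by metis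
    then show ?thesis
      using diffeo_on_inv_has_derivative_inj[OF \<Phi> _ that[unfolded \<Psi>_def], of "(1, 0)"]
      by (auto simp: zero_prod_def)
  qed
  ultimately show thesis
    using that \<open>open U\<close> \<phi>(2,3) \<phi>' through_V' \<open>smooth_on V' \<Psi>\<close> by blast
qed

text \<open>Writing \<gamma> = \<Psi> \<circ> cusp n \<circ> \<phi>, the velocity of \<gamma> is \<phi> ^ (n - 1) times a vector w that is
  nonzero at 0, and \<phi> t / t tends to \<phi>' 0 \<noteq> 0.\<close>
lemma A_equivalent_cusp_velocity:
  fixes \<gamma> :: "real \<Rightarrow> real \<times> real"
  assumes "n \<ge> 1" "A_equivalent_at \<gamma> 0 (cusp n) 0"
  obtains U v c where "open U" "0 \<in> U"
    "\<forall>t\<in>U - {0}. (\<gamma> has_vector_derivative t ^ (n - 1) *\<^sub>R v t) (at t)"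
    "(v \<longlongrightarrow> c) (at 0)" "c \<noteq> 0"
proof -
  obtain U V \<phi> \<phi>' \<Psi> where U: "open U" "0 \<in> U" and \<phi>: "\<phi> 0 = 0"
    and \<phi>': "\<forall>t\<in>U. (\<phi> has_real_derivative \<phi>' t) (at t)" "smooth_on U \<phi>'" "\<phi>' 0 \<noteq> 0"
    and through_V: "\<forall>t\<in>U. cusp n (\<phi> t) \<in> V \<and> \<Psi> (cusp n (\<phi> t)) = \<gamma> t"
    and \<Psi>: "smooth_on V \<Psi>" "\<forall>D. (\<Psi> has_derivative D) (at 0) \<longrightarrow> D (1, 0) \<noteq> 0"
    using A_equivalent_at_cusp_decompose[OF assms] by metis
  have cusp_\<phi>_0: "cusp n (\<phi> 0) = 0" using \<phi> cusp_0[OF assms(1)] by simp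
  obtain D\<Psi> where D\<Psi>: "\<forall>y\<in>V. (\<Psi> has_derivative D\<Psi> y) (at y)" "\<forall>e. smooth_on V (\<lambda>y. D\<Psi> y e)"
    by (rule smooth_on_has_derivative[OF \<Psi>(1)])
  define w where "w t = \<phi>' t *\<^sub>R (real n *\<^sub>R D\<Psi> (cusp n (\<phi> t)) (1, 0)
      + (real (n + 1) * \<phi> t) *\<^sub>R D\<Psi> (cusp n (\<phi> t)) (0, 1))" for t
  define v where "v t = (\<phi> t / t) ^ (n - 1) *\<^sub>R w t" for t
  have "(\<gamma> has_vector_derivative t ^ (n - 1) *\<^sub>R v t) (at t)" if "t \<in> U - {0}" for t
  proof -
    have "((\<lambda>s. \<Psi> (cusp n (\<phi> s))) has_vector_derivative \<phi> t ^ (n - 1) *\<^sub>R w t) (at t)"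
      unfolding w_def using that \<phi>'(1) D\<Psi>(1) through_V
      by (intro has_vector_derivative_comp_cusp assms(1)) auto
    moreover have "\<phi> t ^ (n - 1) *\<^sub>R w t = t ^ (n - 1) *\<^sub>R v t"
      using that by (simp add: v_def power_divide)
    ultimately show ?thesis
      using has_vector_derivative_transform_within_open[OF _ U(1)] that through_V by fastforce
  qed
  moreover have "(v \<longlongrightarrow> \<phi>' 0 ^ (n - 1) *\<^sub>R w 0) (at 0)"
  proof -
    have "isCont \<phi> 0" using \<phi>'(1) U(2) DERIV_isCont by blast
    then have "isCont (\<lambda>t. cusp n (\<phi> t)) 0" unfolding cusp_def by (intro continuous_intros)
    moreover have "isCont (\<lambda>y. D\<Psi> y e) (cusp n (\<phi> 0))" for e
      using smooth_on_isCont D\<Psi>(2) through_V U(2) by blast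
    ultimately have "isCont (\<lambda>t. D\<Psi> (cusp n (\<phi> t)) e) 0" for e by (rule isCont_o2)
    with \<open>isCont \<phi> 0\<close> have "isCont w 0"
      unfolding w_def using smooth_on_isCont[OF \<phi>'(2) U(2)] by (intro continuous_intros)
    moreover have "((\<lambda>t. \<phi> t / t) \<longlongrightarrow> \<phi>' 0) (at 0)"
      using \<phi>'(1) U(2) \<phi> unfolding DERIV_def by auto
    ultimately show ?thesis
      unfolding v_def by (auto intro!: tendsto_intros isContD)
  qed
  moreover have "\<phi>' 0 ^ (n - 1) *\<^sub>R w 0 \<noteq> 0"
  proof -
    have "0 \<in> V" using through_V U(2) cusp_\<phi>_0 by metis
    then have "D\<Psi> 0 (1, 0) \<noteq> 0" using \<Psi>(2) D\<Psi>(1) by blast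
    then show ?thesis using \<phi>'(3) assms(1) cusp_\<phi>_0 unfolding w_def \<phi> by simp
  qed
  ultimately show thesis using that U by blast
qed

theorem mainTheorem3:
  fixes I :: "real set" and \<gamma> \<nu> :: "real \<Rightarrow> real \<times> real" and n :: nat
  assumes "n \<ge> 2"
    and "open I" and "is_interval I" and "0 \<in> I"
    and "legendre_immersion_on I \<gamma> \<nu>"
    and "\<forall>t\<in>I. ell \<nu> t \<noteq> 0"
    and "A_equivalent_at \<gamma> 0 (cusp n) 0"
  shows "(\<forall>k\<in>{1..n-2}. vector_derivative (Ev \<gamma> \<nu> k) (at 0) = 0)
         \<and> vector_derivative (Ev \<gamma> \<nu> (n - 1)) (at 0) \<noteq> 0"
proof -
  text \<open>Only the germ at 0 matters.\<close>
  interpret front_without_inflections I \<gamma> \<nu>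
    using assms(2,5,6) by unfold_locales
  have "n \<ge> 1" using assms(1) by simp
  then obtain U v c where "open U" "0 \<in> U"
    and "\<forall>t\<in>U - {0}. (\<gamma> has_vector_derivative t ^ (n - 1) *\<^sub>R v t) (at t)"
    and "(v \<longlongrightarrow> c) (at 0)" "c \<noteq> 0"
    using assms(7) by (rule A_equivalent_cusp_velocity)
  then have "zero_order (n - 1) (betak \<gamma> \<nu> 0)"
    using zero_order_betak_0[OF assms(4)] by blast
  then have order: "zero_order (n - 1 - k) (betak \<gamma> \<nu> k)" if "k \<le> n - 1" for k
    using zero_order_betak[OF assms(4) _ that] by blast
  have "betak \<gamma> \<nu> k 0 = 0" if "k \<in> {1..n-2}" for k
  proof -
    have "k \<le> n - 1" "0 < n - 1 - k" using that assms(1) by auto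
    then show ?thesis using order[of k] unfolding zero_order_def by (metis funpow_0)
  qed
  moreover have "betak \<gamma> \<nu> (n - 1) 0 \<noteq> 0"
    using order[of "n - 1"] unfolding zero_order_def by simp
  ultimately show ?thesis
    using vector_derivative_Ev_eq_0_iff[OF assms(4)] by blast
qed

end
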